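(* Let $\tilde C=(c_{nm}-c_{mn})_{n,m}$. Suppose there is a sequence of distinct nodes $n_1,\dots,n_k$ with $k>2$, such that $n_{i+1}\in\Omega_{n_i}$ for all $i$ (where $n_{k+1}:=n_1$), and $\sum_{i=1}^k\tilde C_{n_i,n_{i+1}}<0$. Then at every optimal solution of the centralized problem (P) there exists $i\in\{1,\dots,k\}$ with $q_{n_{i+1},n_i}=\kappa_{n_{i+1},n_i}$. Symmetrically, if $\sum_{i=1}^k\tilde C_{n_i,n_{i+1}}>0$, then at every optimal solution of (P) there exists $i$ with $q_{n_i,n_{i+1}}=\kappa_{n_i,n_{i+1}}$.
   Context: Model. $\mathcal N$ is a finite set of nodes (agents) containing a root node $0$. Each node $n$ has a neighborhood $\Omega_n\subseteq\mathcal N$ with $n\in\Omega_n$; the neighbor relation is symmetric ($m\in\Omega_n\iff n\in\Omega_m$) and every node is a neighbor of the root. Decision variables: demand $D_n$, flexibility activation $G_n$, and for each $m\in\Omega_n\setminus\{n\}$ a trade $q_{mn}\in\mathbb R$ (quantity sent from $m$ to $n$; $q_{mn}>0$ means $n$ buys from $m$). The net import of $n$ is $Q_n=\sum_{m\in\Omega_n\setminus\{n\}}q_{mn}$. Parameters: $0\le\underline D_n\le\overline D_n$, $0\le\underline G_n\le\overline G_n$, capacities $\kappa_{nm}=\kappa_{mn}\in[0,\infty)$, exogenous renewable generation $\Delta G_n$, constants $a_n,b_n,d_n>0$, $\tilde a_n,\tilde b_n>0$, target demand $D_n^\star$, preference prices $c_{nm}>0$. Costs/utilities: $C_n(G)=\tfrac12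 a_nG^2+b_nG+d_n$, $U_n(D)=-\tilde a_n(D-D_n^\star)^2+\tilde b_n$, $\tilde C_n(\mathbf q_n)=\sum_{m\in\Omega_n\setminus\{n\}}c_{nm}q_{mn}$, $\Pi_n=U_n(D_n)-C_n(G_n)-\tilde C_n(\mathbf q_n)$, $SW=\sum_{n\in\mathcal N}\Pi_n$. Centralized problem (P): maximize $SW$ over $(\mathbf D,\mathbf G,\mathbf q)$ subject to (1) $\underline D_n\le D_n\le\overline D_n$; (2) $\underline G_n\le G_n\le\overline G_n$; (3) $q_{mn}\le\kappa_{mn}$ for all $n$ and $m\in\Omega_n\setminus\{n\}$; (4) $q_{mn}+q_{nm}\le0$ for each pair of distinct neighbors; (5) $D_n=G_n+\Delta G_n+Q_n$ for all $n$. *)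

theory Defs
  imports Main "HOL.Real"
begin

text \<open>Net import of node n: Q_n = sum over neighbours m (m \<noteq> n) of q m n,
  where q m n is the quantity sent from m to n.\<close>
definition net_import :: "('a \<Rightarrow> 'a set) \<Rightarrow> ('a \<Rightarrow> 'a \<Rightarrow> real) \<Rightarrow> 'a \<Rightarrow> real" where
  "net_import \<Omega> q n = (\<Sum>m\<in>\<Omega> n - {n}. q m n)"

definition gen_cost :: "real \<Rightarrow> real \<Rightarrow> real \<Rightarrow> real \<Rightarrow> real" where
  "gen_cost a b d G = a * G\<^sup>2 / 2 + b * G + d"

definition utility :: "real \<Rightarrow> real \<Rightarrow> real \<Rightarrow> real \<Rightarrow> real" where
  "utility at bt Dstar D = - at * (D - Dstar)\<^sup>2 + bt"

definition trade_cost :: "('a \<Rightarrow> 'a set) \<Rightarrow> ('a \<Rightarrow> 'a \<Rightarrow> real) \<Rightarrow> ('a \<Rightarrow> 'a \<Rightarrow> real) \<Rightarrow> 'a \<Rightarrow> real" where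
  "trade_cost \<Omega> c q n = (\<Sum>m\<in>\<Omega> n - {n}. c n m * q m n)"

definition social_welfare ::
  "'a set \<Rightarrow> ('a \<Rightarrow> 'a set) \<Rightarrow> ('a \<Rightarrow> real) \<Rightarrow> ('a \<Rightarrow> real) \<Rightarrow> ('a \<Rightarrow> real) \<Rightarrow>
   ('a \<Rightarrow> real) \<Rightarrow> ('a \<Rightarrow> real) \<Rightarrow> ('a \<Rightarrow> real) \<Rightarrow> ('a \<Rightarrow> 'a \<Rightarrow> real) \<Rightarrow>
   ('a \<Rightarrow> real) \<Rightarrow> ('a \<Rightarrow> real) \<Rightarrow> ('a \<Rightarrow> 'a \<Rightarrow> real) \<Rightarrow> real" where
  "social_welfare N \<Omega> a b d at bt Dstar c D G q =
     (\<Sum>n\<in>N. utility (at n) (bt n) (Dstar n) (D n) - gen_cost (a n) (b n) (d n) (G n)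
              - trade_cost \<Omega> c q n)"

definition feasible ::
  "'a set \<Rightarrow> ('a \<Rightarrow> 'a set) \<Rightarrow> ('a \<Rightarrow> real) \<Rightarrow> ('a \<Rightarrow> real) \<Rightarrow> ('a \<Rightarrow> real) \<Rightarrow> ('a \<Rightarrow> real) \<Rightarrow>
   ('a \<Rightarrow> 'a \<Rightarrow> real) \<Rightarrow> ('a \<Rightarrow> real) \<Rightarrow>
   ('a \<Rightarrow> real) \<Rightarrow> ('a \<Rightarrow> real) \<Rightarrow> ('a \<Rightarrow> 'a \<Rightarrow> real) \<Rightarrow> bool" where
  "feasible N \<Omega> Dlo Dhi Glo Ghi \<kappa> \<Delta>G D G q \<longleftrightarrow>
     (\<forall>n\<in>N. Dlo n \<le> D n \<and> D n \<le> Dhi n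
          \<and> Glo n \<le> G n \<and> G n \<le> Ghi n
          \<and> (\<forall>m\<in>\<Omega> n - {n}. q m n \<le> \<kappa> m n \<and> q m n + q n m \<le> 0)
          \<and> D n = G n + \<Delta>G n + net_import \<Omega> q n)"

definition optimal_P ::
  "'a set \<Rightarrow> ('a \<Rightarrow> 'a set) \<Rightarrow> ('a \<Rightarrow> real) \<Rightarrow> ('a \<Rightarrow> real) \<Rightarrow> ('a \<Rightarrow> real) \<Rightarrow> ('a \<Rightarrow> real) \<Rightarrow>
   ('a \<Rightarrow> 'a \<Rightarrow> real) \<Rightarrow> ('a \<Rightarrow> real) \<Rightarrow>
   ('a \<Rightarrow> real) \<Rightarrow> ('a \<Rightarrow> real) \<Rightarrow> ('a \<Rightarrow> real) \<Rightarrow> ('a \<Rightarrow> real) \<Rightarrow> ('a \<Rightarrow> real) \<Rightarrow>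
   ('a \<Rightarrow> real) \<Rightarrow> ('a \<Rightarrow> 'a \<Rightarrow> real) \<Rightarrow>
   ('a \<Rightarrow> real) \<Rightarrow> ('a \<Rightarrow> real) \<Rightarrow> ('a \<Rightarrow> 'a \<Rightarrow> real) \<Rightarrow> bool" where
  "optimal_P N \<Omega> Dlo Dhi Glo Ghi \<kappa> \<Delta>G a b d at bt Dstar c D G q \<longleftrightarrow>
     feasible N \<Omega> Dlo Dhi Glo Ghi \<kappa> \<Delta>G D G q \<and>
     (\<forall>D' G' q'. feasible N \<Omega> Dlo Dhi Glo Ghi \<kappa> \<Delta>G D' G' q' \<longrightarrow>
        social_welfare N \<Omega> a b d at bt Dstar c D' G' q' \<le>
        social_welfare N \<Omega> a b d at bt Dstar c D G q)"

end

theory Submission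
  imports Defs
begin

text \<open>
  Along the cycle define the circulation that pushes one unit from each node to its predecessor.
  It changes no net import and keeps every pair constraint \<open>q m n + q n m \<le> 0\<close>, while it
  changes the social welfare by minus the cycle sum of \<open>c n m - c m n\<close>.  If that sum is negative,
  pushing a small positive amount along the circulation improves an optimal solution unless one
  of the traversed edges is already at capacity; a positive sum is treated with the reverse flow.
\<close>

lemma sum_lessThan_Suc_mod:
  assumes "0 < k"
  shows "(\<Sum>i<k. f (Suc i mod k)) = (\<Sum>i<k. f i :: 'b::comm_monoid_add)"
proof -
  obtain k' where k: "k = Suc k'" using assms by (cases k) auto
  have "(\<Sum>i<k'. f (Suc i mod k)) = (\<Sum>i<k'. f (Suc i))" using k by (intro sum.cong) auto
  then have "(\<Sum>i<k. f (Suc i mod k)) = (\<Sum>i<k'. f (Suc i)) + f 0" using k by simp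
  also have "\<dots> = (\<Sum>i<k. f i)" unfolding k sum.lessThan_Suc_shift by (simp add: add.commute)
  finally show ?thesis .
qed

lemma sum_sum_delta:
  fixes w :: "'a \<Rightarrow> 'a \<Rightarrow> real"
  assumes "finite N" "\<And>n. n \<in> N \<Longrightarrow> finite (A n)" "a \<in> N" "b \<in> A a"
  shows "(\<Sum>n\<in>N. \<Sum>m\<in>A n. if m = b \<and> n = a then w n m else 0) = w a b"
proof -
  have "(\<Sum>m\<in>A n. if m = b \<and> n = a then w n m else 0) = (if n = a then w a b else 0)"
    if "n \<in> N" for n
  proof (cases "n = a")
    case True
    then show ?thesis using assms by (simp add: sum.delta')
  qed simp
  then have "(\<Sum>n\<in>N. \<Sum>m\<in>A n. if m = b \<and> n = a then w n m else 0)
      = (\<Sum>n\<in>N. if n = a then w a b else 0)"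
    by (rule sum.cong[OF refl])
  also have "\<dots> = w a b" using assms by (simp add: sum.delta')
  finally show ?thesis .
qed

text \<open>
  Summing over the edges
  rather than testing membership avoids having to show that the edges are pairwise distinct.
\<close>
definition cycle_circulation :: "(nat \<Rightarrow> 'a) \<Rightarrow> nat \<Rightarrow> 'a \<Rightarrow> 'a \<Rightarrow> real" where
  "cycle_circulation s k m n =
     (\<Sum>i<k. (if m = s (Suc i mod k) \<and> n = s i then 1 else 0)
           - (if m = s i \<and> n = s (Suc i mod k) then 1 else 0))"

lemma cycle_circulation_antisym: "cycle_circulation s k n m = - cycle_circulation s k m n"
  unfolding cycle_circulation_def sum_negf[symmetric] minus_diff_eq by (simp only: conj_commute)

lemma sum_cycle_circulation_eq_0:
  assumes "0 < k" "finite A"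
    and "\<And>i. i < k \<Longrightarrow> n = s i \<Longrightarrow> s (Suc i mod k) \<in> A"
    and "\<And>i. i < k \<Longrightarrow> n = s (Suc i mod k) \<Longrightarrow> s i \<in> A"
  shows "(\<Sum>m\<in>A. cycle_circulation s k m n) = 0"
proof -
  have "(\<Sum>m\<in>A. cycle_circulation s k m n)
      = (\<Sum>i<k. (\<Sum>m\<in>A. if m = s (Suc i mod k) \<and> n = s i then 1 else 0)
                 - (\<Sum>m\<in>A. if m = s i \<and> n = s (Suc i mod k) then 1 else 0))"
    unfolding cycle_circulation_def by (subst sum.swap) (simp add: sum_subtractf)
  also have "\<dots> = (\<Sum>i<k. (if n = s i then 1 else 0) - (if n = s (Suc i mod k) then 1 else 0))"
    using assms by (intro sum.cong refl) (auto simp: sum.delta')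
  also have "\<dots> = 0"
    using sum_lessThan_Suc_mod[OF \<open>0 < k\<close>, of "\<lambda>i. if n = s i then 1 else 0 :: real"]
    by (simp add: sum_subtractf)
  finally show ?thesis .
qed

lemma sum_weighted_cycle_circulation:
  fixes w :: "'a \<Rightarrow> 'a \<Rightarrow> real"
  assumes "finite N" "\<And>n. n \<in> N \<Longrightarrow> finite (A n)" "0 < k" "\<And>i. i < k \<Longrightarrow> s i \<in> N"
    and "\<And>i. i < k \<Longrightarrow> s (Suc i mod k) \<in> A (s i)"
    and "\<And>i. i < k \<Longrightarrow> s i \<in> A (s (Suc i mod k))"
  shows "(\<Sum>n\<in>N. \<Sum>m\<in>A n. w n m * cycle_circulation s k m n)
       = (\<Sum>i<k. w (s i) (s (Suc i mod k)) - w (s (Suc i mod k)) (s i))"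
proof -
  define f where "f n m i = (if m = s (Suc i mod k) \<and> n = s i then w n m else 0)
                          - (if m = s i \<and> n = s (Suc i mod k) then w n m else 0)" for n m i
  have "(\<Sum>n\<in>N. \<Sum>m\<in>A n. w n m * cycle_circulation s k m n)
      = (\<Sum>n\<in>N. \<Sum>m\<in>A n. \<Sum>i<k. f n m i)"
    unfolding cycle_circulation_def sum_distrib_left f_def
    by (simp only: right_diff_distrib if_distrib[of "times (w _ _)"] mult_1_right mult_zero_right)
  also have "\<dots> = (\<Sum>i<k. \<Sum>n\<in>N. \<Sum>m\<in>A n. f n m i)"
    by (subst sum.swap) (simp only: sum.swap[of _ "A _"])
  also have "\<dots> = (\<Sum>i<k. w (s i) (s (Suc i mod k)) - w (s (Suc i mod k)) (s i))"
  proof (rule sum.cong[OF refl])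
    fix i assume "i \<in> {..<k}"
    then have i: "s i \<in> N" "s (Suc i mod k) \<in> N" using assms(3,4) by simp_all
    show "(\<Sum>n\<in>N. \<Sum>m\<in>A n. f n m i) = w (s i) (s (Suc i mod k)) - w (s (Suc i mod k)) (s i)"
      unfolding f_def sum_subtractf
      using \<open>i \<in> {..<k}\<close> i assms(1,2,5,6) by (simp add: sum_sum_delta)
  qed
  finally show ?thesis .
qed

lemma abs_cycle_circulation_le: "\<bar>cycle_circulation s k m n\<bar> \<le> real k"
proof -
  \<comment> \<open>stated for abstract \<open>P\<close>, \<open>Q\<close>: the simplifier loops on the equational conditions themselves\<close>
  have term_le: "\<bar>(if P then 1 else 0) - (if Q then 1 else 0)\<bar> \<le> (1::real)" for P Q
    by simp
  have "\<bar>cycle_circulation s k m n\<bar>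
      \<le> (\<Sum>i<k. \<bar>(if m = s (Suc i mod k) \<and> n = s i then 1 else 0)
                 - (if m = s i \<and> n = s (Suc i mod k) then 1 else 0)\<bar>)"
    unfolding cycle_circulation_def by (rule sum_abs)
  also have "\<dots> \<le> of_nat (card {..<k}) * 1"
    using term_le by (rule sum_bounded_above)
  also have "\<dots> = real k" by simp
  finally show ?thesis .
qed

lemma cycle_circulation_pos_imp:
  assumes "0 < cycle_circulation s k m n"
  shows "\<exists>i<k. m = s (Suc i mod k) \<and> n = s i"
proof (rule ccontr)
  assume no_edge: "\<not> ?thesis"
  have "cycle_circulation s k m n \<le> 0"
    unfolding cycle_circulation_def
  proof (rule sum_nonpos)
    fix i assume "i \<in> {..<k}"
    have "\<not> P \<Longrightarrow> (if P then 1 else 0) - (if Q then 1 else 0) \<le> (0::real)" for P Q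
      by simp
    moreover from \<open>i \<in> {..<k}\<close> no_edge have "\<not> (m = s (Suc i mod k) \<and> n = s i)" by blast
    ultimately show "(if m = s (Suc i mod k) \<and> n = s i then 1 else 0)
             - (if m = s i \<and> n = s (Suc i mod k) then 1 else 0) \<le> (0::real)" .
  qed
  with assms show False by simp
qed

lemma feasible_exists_step_within_capacity:
  fixes u :: "'a \<Rightarrow> 'a \<Rightarrow> real"
  assumes feas: "feasible N \<Omega> Dlo Dhi Glo Ghi \<kappa> \<Delta>G D G q"
    and "finite P" "0 < B" "\<And>m n. u m n \<le> B"
    and slack: "\<And>m n. (m, n) \<in> P \<Longrightarrow> q m n < \<kappa> m n"
    and increase_in_P: "\<And>m n. n \<in> N \<Longrightarrow> m \<in> \<Omega> n - {n} \<Longrightarrow> 0 < u m n \<Longrightarrow> (m, n) \<in> P"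
  shows "\<exists>e>0. \<forall>n\<in>N. \<forall>m\<in>\<Omega> n - {n}. q m n + e * u m n \<le> \<kappa> m n"
proof -
  define M where "M = Min (insert B ((\<lambda>(m, n). \<kappa> m n - q m n) ` P))"
  have "0 < M"
    unfolding M_def using assms(2,3) slack by (subst Min_gr_iff) auto
  have M_le: "M \<le> \<kappa> m n - q m n" if "(m, n) \<in> P" for m n
    unfolding M_def using assms(2) that by (intro Min_le) force+
  have "q m n + M / B * u m n \<le> \<kappa> m n" if "n \<in> N" "m \<in> \<Omega> n - {n}" for m n
  proof (cases "0 < u m n")
    case True
    have "M / B * u m n \<le> M / B * B"
      using assms(3,4) \<open>0 < M\<close> by (intro mult_left_mono) auto
    also have "\<dots> \<le> \<kappa> m n - q m n"
      using assms(3) increase_in_P[OF that True] M_le by simp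
    finally show ?thesis by simp
  next
    case False
    then have "M / B * u m n \<le> 0"
      using assms(3) \<open>0 < M\<close> by (intro mult_nonneg_nonpos) auto
    moreover have "q m n \<le> \<kappa> m n"
      using feas that unfolding feasible_def by blast
    ultimately show ?thesis by linarith
  qed
  then show ?thesis using \<open>0 < M\<close> assms(3) by (intro exI[of _ "M / B"]) auto
qed

lemma feasible_add_circulation:
  assumes feas: "feasible N \<Omega> Dlo Dhi Glo Ghi \<kappa> \<Delta>G D G q"
    and antisym: "\<And>m n. \<delta> n m = - \<delta> m n"
    and balanced: "\<And>n. n \<in> N \<Longrightarrow> (\<Sum>m\<in>\<Omega> n - {n}. \<delta> m n) = 0"
    and cap: "\<And>n m. n \<in> N \<Longrightarrow> m \<in> \<Omega> n - {n} \<Longrightarrow> q m n + t * \<delta> m n \<le> \<kappa> m n"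
  shows "feasible N \<Omega> Dlo Dhi Glo Ghi \<kappa> \<Delta>G D G (\<lambda>m n. q m n + t * \<delta> m n)"
proof -
  have net_import: "net_import \<Omega> (\<lambda>m n. q m n + t * \<delta> m n) n = net_import \<Omega> q n"
    if "n \<in> N" for n
    using balanced[OF that] by (simp add: net_import_def sum.distrib sum_distrib_left[symmetric])
  show ?thesis
    unfolding feasible_def
  proof (intro ballI conjI)
    fix n assume "n \<in> N"
    with feas show "Dlo n \<le> D n" "D n \<le> Dhi n" "Glo n \<le> G n" "G n \<le> Ghi n"
      "D n = G n + \<Delta>G n + net_import \<Omega> (\<lambda>m n. q m n + t * \<delta> m n) n"
      unfolding feasible_def net_import[OF \<open>n \<in> N\<close>] by blast+
    fix m assume "m \<in> \<Omega> n - {n}"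
    with \<open>n \<in> N\<close> feas have "q m n + q n m \<le> 0"
      unfolding feasible_def by blast
    then show "q m n + t * \<delta> m n + (q n m + t * \<delta> n m) \<le> 0"
      using antisym[of m n] by simp
    show "q m n + t * \<delta> m n \<le> \<kappa> m n"
      using cap \<open>n \<in> N\<close> \<open>m \<in> \<Omega> n - {n}\<close> .
  qed
qed

lemma social_welfare_add_circulation:
  "social_welfare N \<Omega> a b d at bt Dstar c D G (\<lambda>m n. q m n + t * \<delta> m n)
     = social_welfare N \<Omega> a b d at bt Dstar c D G q
       - t * (\<Sum>n\<in>N. \<Sum>m\<in>\<Omega> n - {n}. c n m * \<delta> m n)"
  by (simp add: social_welfare_def trade_cost_def distrib_left sum.distrib sum_subtractf
      sum_distrib_left mult.left_commute)

lemma optimal_P_circulation_nonneg: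
  assumes opt: "optimal_P N \<Omega> Dlo Dhi Glo Ghi \<kappa> \<Delta>G a b d at bt Dstar c D G q"
    and antisym: "\<And>m n. \<delta> n m = - \<delta> m n"
    and balanced: "\<And>n. n \<in> N \<Longrightarrow> (\<Sum>m\<in>\<Omega> n - {n}. \<delta> m n) = 0"
    and cap: "\<And>n m. n \<in> N \<Longrightarrow> m \<in> \<Omega> n - {n} \<Longrightarrow> q m n + t * \<delta> m n \<le> \<kappa> m n"
  shows "0 \<le> t * (\<Sum>n\<in>N. \<Sum>m\<in>\<Omega> n - {n}. c n m * \<delta> m n)"
proof -
  have "feasible N \<Omega> Dlo Dhi Glo Ghi \<kappa> \<Delta>G D G q"
    using opt unfolding optimal_P_def by blast
  then have "feasible N \<Omega> Dlo Dhi Glo Ghi \<kappa> \<Delta>G D G (\<lambda>m n. q m n + t * \<delta> m n)"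
    using antisym balanced cap by (rule feasible_add_circulation)
  with opt have "social_welfare N \<Omega> a b d at bt Dstar c D G (\<lambda>m n. q m n + t * \<delta> m n)
      \<le> social_welfare N \<Omega> a b d at bt Dstar c D G q"
    unfolding optimal_P_def by blast
  then show ?thesis by (simp add: social_welfare_add_circulation)
qed

locale network_cycle =
  fixes N :: "'a set" and \<Omega> :: "'a \<Rightarrow> 'a set" and s :: "nat \<Rightarrow> 'a" and k :: nat
  assumes finite_N: "finite N"
    and Omega_subset: "\<And>n. n \<in> N \<Longrightarrow> \<Omega> n \<subseteq> N"
    and Omega_sym: "\<And>n m. n \<in> N \<Longrightarrow> m \<in> N \<Longrightarrow> m \<in> \<Omega> n \<longleftrightarrow> n \<in> \<Omega> m"
    and one_less_k: "1 < k"
    and s_in: "\<And>i. i < k \<Longrightarrow> s i \<in> N"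
    and inj_s: "inj_on s {..<k}"
    and s_adj: "\<And>i. i < k \<Longrightarrow> s (Suc i mod k) \<in> \<Omega> (s i)"
begin

lemma successor_ne:
  assumes "i < k"
  shows "s (Suc i mod k) \<noteq> s i"
proof
  assume "s (Suc i mod k) = s i"
  then have "Suc i mod k = i"
    using assms one_less_k by (intro inj_onD[OF inj_s]) auto
  moreover have "Suc i mod k = Suc i \<or> Suc i = k"
    using assms by (cases "Suc i < k") auto
  ultimately show False
    using one_less_k by auto
qed

lemma s_Suc_mod_in: "i < k \<Longrightarrow> s (Suc i mod k) \<in> N"
  using s_in one_less_k by simp

lemma cycle_edge_in:
  assumes "i < k"
  shows "s (Suc i mod k) \<in> \<Omega> (s i) - {s i}" and "s i \<in> \<Omega> (s (Suc i mod k)) - {s (Suc i mod k)}"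
  using s_adj[OF assms] successor_ne[OF assms] Omega_sym[OF s_in[OF assms] s_Suc_mod_in[OF assms]]
  by auto

lemma finite_neighbours: "n \<in> N \<Longrightarrow> finite (\<Omega> n - {n})"
  using finite_N Omega_subset by (meson finite_Diff finite_subset)

lemma cycle_circulation_balanced:
  "n \<in> N \<Longrightarrow> (\<Sum>m\<in>\<Omega> n - {n}. cycle_circulation s k m n) = 0"
  using one_less_k finite_neighbours cycle_edge_in by (intro sum_cycle_circulation_eq_0) auto

lemma cycle_circulation_cost:
  "(\<Sum>n\<in>N. \<Sum>m\<in>\<Omega> n - {n}. c n m * cycle_circulation s k m n)
     = (\<Sum>i<k. c (s i) (s (Suc i mod k)) - c (s (Suc i mod k)) (s i))"
  using finite_N finite_neighbours one_less_k s_in cycle_edge_in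
  by (intro sum_weighted_cycle_circulation) auto

lemma optimal_P_cycle_circulation_nonneg:
  assumes "optimal_P N \<Omega> Dlo Dhi Glo Ghi \<kappa> \<Delta>G a b d at bt Dstar c D G q"
    and "\<And>n m. n \<in> N \<Longrightarrow> m \<in> \<Omega> n - {n} \<Longrightarrow> q m n + t * cycle_circulation s k m n \<le> \<kappa> m n"
  shows "0 \<le> t * (\<Sum>i<k. c (s i) (s (Suc i mod k)) - c (s (Suc i mod k)) (s i))"
  using optimal_P_circulation_nonneg[OF assms(1) cycle_circulation_antisym cycle_circulation_balanced
      assms(2)]
  by (simp add: cycle_circulation_cost)

lemma optimal_P_saturates_cycle_support:
  assumes opt: "optimal_P N \<Omega> Dlo Dhi Glo Ghi \<kappa> \<Delta>G a b d at bt Dstar c D G q"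
    and "\<bar>\<sigma>\<bar> = 1"
    and cost: "\<sigma> * (\<Sum>i<k. c (s i) (s (Suc i mod k)) - c (s (Suc i mod k)) (s i)) < 0"
    and "finite P"
    and P_edges: "\<And>m n. (m, n) \<in> P \<Longrightarrow> n \<in> N \<and> m \<in> \<Omega> n - {n}"
    and support: "\<And>m n. 0 < \<sigma> * cycle_circulation s k m n \<Longrightarrow> (m, n) \<in> P"
  shows "\<exists>(m, n)\<in>P. q m n = \<kappa> m n"
proof (rule ccontr)
  assume unsaturated: "\<not> ?thesis"
  have feas: "feasible N \<Omega> Dlo Dhi Glo Ghi \<kappa> \<Delta>G D G q"
    using opt unfolding optimal_P_def by blast
  have slack: "q m n < \<kappa> m n" if "(m, n) \<in> P" for m n
  proof (rule le_neq_trans)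
    show "q m n \<le> \<kappa> m n"
      using feas P_edges[OF that] unfolding feasible_def by blast
    show "q m n \<noteq> \<kappa> m n"
      using unsaturated that by blast
  qed
  have bound: "\<sigma> * cycle_circulation s k m n \<le> real k" for m n
  proof -
    have "\<sigma> * cycle_circulation s k m n \<le> \<bar>\<sigma> * cycle_circulation s k m n\<bar>"
      by (rule abs_ge_self)
    also have "\<dots> = \<bar>cycle_circulation s k m n\<bar>"
      using \<open>\<bar>\<sigma>\<bar> = 1\<close> by (simp add: abs_mult)
    also have "\<dots> \<le> real k"
      by (rule abs_cycle_circulation_le)
    finally show ?thesis .
  qed
  have "\<exists>e>0. \<forall>n\<in>N. \<forall>m\<in>\<Omega> n - {n}. q m n + e * (\<sigma> * cycle_circulation s k m n) \<le> \<kappa> m n"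
    using \<open>finite P\<close> one_less_k bound slack support
    by (intro feasible_exists_step_within_capacity[OF feas, where P = P and B = "real k"]) simp_all
  then obtain e where "0 < e"
    and step: "\<forall>n\<in>N. \<forall>m\<in>\<Omega> n - {n}. q m n + e * (\<sigma> * cycle_circulation s k m n) \<le> \<kappa> m n"
    by blast
  have "0 \<le> (e * \<sigma>) * (\<Sum>i<k. c (s i) (s (Suc i mod k)) - c (s (Suc i mod k)) (s i))"
    using step by (intro optimal_P_cycle_circulation_nonneg[OF opt]) (simp add: mult.assoc)
  moreover have "e * (\<sigma> * (\<Sum>i<k. c (s i) (s (Suc i mod k)) - c (s (Suc i mod k)) (s i))) < 0"
    using \<open>0 < e\<close> cost by (rule mult_pos_neg)
  ultimately show False by (simp add: mult.assoc)
qed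

lemma optimal_P_saturates_backward_edge:
  assumes "(\<Sum>i<k. c (s i) (s (Suc i mod k)) - c (s (Suc i mod k)) (s i)) < 0"
    and "optimal_P N \<Omega> Dlo Dhi Glo Ghi \<kappa> \<Delta>G a b d at bt Dstar c D G q"
  shows "\<exists>i<k. q (s (Suc i mod k)) (s i) = \<kappa> (s (Suc i mod k)) (s i)"
proof -
  have "\<exists>(m, n)\<in>(\<lambda>i. (s (Suc i mod k), s i)) ` {..<k}. q m n = \<kappa> m n"
  proof (rule optimal_P_saturates_cycle_support[OF assms(2), where \<sigma> = 1])
    show "n \<in> N \<and> m \<in> \<Omega> n - {n}" if "(m, n) \<in> (\<lambda>i. (s (Suc i mod k), s i)) ` {..<k}" for m n
      using that s_in cycle_edge_in(1) by blast
    show "(m, n) \<in> (\<lambda>i. (s (Suc i mod k), s i)) ` {..<k}" if "0 < 1 * cycle_circulation s k m n" for m n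
      using cycle_circulation_pos_imp[of s k m n] that by auto
  qed (use assms(1) in simp_all)
  then show ?thesis by blast
qed

lemma optimal_P_saturates_forward_edge:
  assumes "(\<Sum>i<k. c (s i) (s (Suc i mod k)) - c (s (Suc i mod k)) (s i)) > 0"
    and "optimal_P N \<Omega> Dlo Dhi Glo Ghi \<kappa> \<Delta>G a b d at bt Dstar c D G q"
  shows "\<exists>i<k. q (s i) (s (Suc i mod k)) = \<kappa> (s i) (s (Suc i mod k))"
proof -
  have "\<exists>(m, n)\<in>(\<lambda>i. (s i, s (Suc i mod k))) ` {..<k}. q m n = \<kappa> m n"
  proof (rule optimal_P_saturates_cycle_support[OF assms(2), where \<sigma> = "-1"])
    show "n \<in> N \<and> m \<in> \<Omega> n - {n}" if "(m, n) \<in> (\<lambda>i. (s i, s (Suc i mod k))) ` {..<k}" for m n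
      using that s_Suc_mod_in cycle_edge_in(2) by blast
    show "(m, n) \<in> (\<lambda>i. (s i, s (Suc i mod k))) ` {..<k}" if "0 < -1 * cycle_circulation s k m n" for m n
      using that cycle_circulation_pos_imp[of s k n m] by (auto simp: cycle_circulation_antisym[of s k n m])
  qed (use assms(1) in simp_all)
  then show ?thesis by blast
qed

end

theorem proposition5:
  fixes N :: "'a set" and root :: 'a and \<Omega> :: "'a \<Rightarrow> 'a set"
    and Dlo Dhi Glo Ghi \<Delta>G a b d at bt Dstar :: "'a \<Rightarrow> real"
    and \<kappa> c :: "'a \<Rightarrow> 'a \<Rightarrow> real"
    and s :: "nat \<Rightarrow> 'a" and k :: nat
  assumes finN: "finite N"
    and root: "root \<in> N"
    and Omega_sub: "\<And>n. n \<in> N \<Longrightarrow> \<Omega> n \<subseteq> N"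
    and Omega_refl: "\<And>n. n \<in> N \<Longrightarrow> n \<in> \<Omega> n"
    and Omega_sym: "\<And>n m. n \<in> N \<Longrightarrow> m \<in> N \<Longrightarrow> m \<in> \<Omega> n \<longleftrightarrow> n \<in> \<Omega> m"
    and Omega_root: "\<And>n. n \<in> N \<Longrightarrow> root \<in> \<Omega> n"
    and Dbounds: "\<And>n. n \<in> N \<Longrightarrow> 0 \<le> Dlo n \<and> Dlo n \<le> Dhi n"
    and Gbounds: "\<And>n. n \<in> N \<Longrightarrow> 0 \<le> Glo n \<and> Glo n \<le> Ghi n"
    and kappa_nonneg: "\<And>n m. n \<in> N \<Longrightarrow> m \<in> N \<Longrightarrow> 0 \<le> \<kappa> n m"
    and kappa_sym: "\<And>n m. n \<in> N \<Longrightarrow> m \<in> N \<Longrightarrow> \<kappa> n m = \<kappa> m n"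
    and pos: "\<And>n. n \<in> N \<Longrightarrow> a n > 0 \<and> b n > 0 \<and> d n > 0 \<and> at n > 0 \<and> bt n > 0"
    and c_pos: "\<And>n m. n \<in> N \<Longrightarrow> m \<in> N \<Longrightarrow> c n m > 0"
    and k_gt: "k > 2"
    and s_in: "\<And>i. i < k \<Longrightarrow> s i \<in> N"
    and s_distinct: "inj_on s {..<k}"
    and s_adj: "\<And>i. i < k \<Longrightarrow> s (Suc i mod k) \<in> \<Omega> (s i)"
  shows
    "((\<Sum>i<k. c (s i) (s (Suc i mod k)) - c (s (Suc i mod k)) (s i)) < 0 \<longrightarrow>
        (\<forall>D G q. optimal_P N \<Omega> Dlo Dhi Glo Ghi \<kappa> \<Delta>G a b d at bt Dstar c D G q \<longrightarrow>
           (\<exists>i<k. q (s (Suc i mod k)) (s i) = \<kappa> (s (Suc i mod k)) (s i))))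
     \<and>
     ((\<Sum>i<k. c (s i) (s (Suc i mod k)) - c (s (Suc i mod k)) (s i)) > 0 \<longrightarrow>
        (\<forall>D G q. optimal_P N \<Omega> Dlo Dhi Glo Ghi \<kappa> \<Delta>G a b d at bt Dstar c D G q \<longrightarrow>
           (\<exists>i<k. q (s i) (s (Suc i mod k)) = \<kappa> (s i) (s (Suc i mod k)))))"
proof -
  interpret network_cycle N \<Omega> s k
    using finN Omega_sub Omega_sym k_gt s_in s_distinct s_adj by unfold_locales auto
  show ?thesis
    by (blast intro: optimal_P_saturates_backward_edge optimal_P_saturates_forward_edge)
qed

end
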